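(* Let $m\ge2$ and $G=CK(2m-1)$. Every set of edges $B\subset E(G)$ of Class B is a blocker for the simple Hamiltonian paths of $G$.
   Context: $CK(2m-1)$ is the complete convex geometric graph on $2m-1$ points in convex position, labelled clockwise $0,\dots,2m-2$ (elements of $\mathbb{Z}_{2m-1}$; indices mod $2m-1$), with all segments as edges. A simple Hamiltonian path (SHP) is a path through all vertices whose edges pairwise do not cross; a blocker for SHPs is an edge set of smallest possible size (which is $m$) sharing an edge with every SHP. Class B (up to cyclic rotation $x\mapsto x+k$ of labels): sets consisting of the following edges, for integers $\alpha,\delta\ge0$, $\beta,\gamma\ge2$ with $\alpha+\delta\le m-5$ and $\beta+\gamma=m-\alpha-\delta-1$: (1)–(2) all edges of the boundary paths $\langle\alpha,\dots,\alpha+\beta\rangle$ and $\langle\alpha+\beta+1,\dots,m-\delta\rangle$; (3) the edge $[\alpha+\beta-\eta,\,\alpha+\beta+1+\eta]$ for some integer $1\le\eta\le\min(\beta-1,\gamma-1)$; (4) the edges $[i-1-\epsilon_i,\,i+\epsilon_i]$, $1\le i\le\alpha$, with $\alpha+\beta-1>\epsilon_1>\dots>\epsilon_\alpha>0$; (5) the edges $[m-j-\xi_j,\,m-j+1+\xi_j]$, $1\le j\le\delta$, with $\gamma+\delta-1>\xi_1>\dots>\xi_\delta>0$. *)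

theory Defs
  imports Main
begin

text \<open>The complete convex geometric graph CK(n): vertices 0..n-1 in convex position,
  labelled clockwise; vertex labels are elements of Z_n, represented by 0..n-1.
  An edge (segment) is a two-element set of vertices.\<close>

definition vx :: "nat \<Rightarrow> int \<Rightarrow> nat" where
  "vx n x = nat (x mod int n)"

definition CK_edges :: "nat \<Rightarrow> nat set set" where
  "CK_edges n = {{a, b} | a b. a < n \<and> b < n \<and> a \<noteq> b}"

definition cyc_between :: "nat \<Rightarrow> nat \<Rightarrow> nat \<Rightarrow> nat \<Rightarrow> bool" where
  "cyc_between n a x b \<longleftrightarrow>
     0 < (int x - int a) mod int n \<and> (int x - int a) mod int n < (int b - int a) mod int n"

text \<open>Two segments between points in convex position cross iff they have four
  distinct endpoints which interleave along the circle.\<close>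
definition crosses :: "nat \<Rightarrow> nat set \<Rightarrow> nat set \<Rightarrow> bool" where
  "crosses n e f \<longleftrightarrow> (\<exists>a b c d. e = {a, b} \<and> f = {c, d} \<and>
      distinct [a, b, c, d] \<and> cyc_between n a c b \<noteq> cyc_between n a d b)"

definition path_edges :: "nat list \<Rightarrow> nat set set" where
  "path_edges p = {{p ! i, p ! Suc i} | i. Suc i < length p}"

definition SHP :: "nat \<Rightarrow> nat list \<Rightarrow> bool" where
  "SHP n p \<longleftrightarrow> distinct p \<and> set p = {0..<n} \<and>
     (\<forall>e\<in>path_edges p. \<forall>f\<in>path_edges p. \<not> crosses n e f)"

definition meets_all_SHP :: "nat \<Rightarrow> nat set set \<Rightarrow> bool" where
  "meets_all_SHP n B \<longleftrightarrow> (\<forall>p. SHP n p \<longrightarrow> B \<inter> path_edges p \<noteq> {})"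

definition SHP_blocker :: "nat \<Rightarrow> nat set set \<Rightarrow> bool" where
  "SHP_blocker n B \<longleftrightarrow> B \<subseteq> CK_edges n \<and> meets_all_SHP n B \<and>
     (\<forall>B'. B' \<subseteq> CK_edges n \<and> meets_all_SHP n B' \<longrightarrow> card B \<le> card B')"

definition seg :: "nat \<Rightarrow> int \<Rightarrow> int \<Rightarrow> int \<Rightarrow> nat set" where
  "seg n k x y = {vx n (x + k), vx n (y + k)}"

definition classB_set ::
  "nat \<Rightarrow> int \<Rightarrow> int \<Rightarrow> int \<Rightarrow> int \<Rightarrow> int \<Rightarrow> int \<Rightarrow> (int \<Rightarrow> int) \<Rightarrow> (int \<Rightarrow> int) \<Rightarrow> nat set set" where
  "classB_set m k \<alpha> \<beta> \<gamma> \<delta> \<eta> \<epsilon> \<xi> =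
     (let n = 2 * m - 1; mi = int m in
       {seg n k i (i + 1) | i. \<alpha> \<le> i \<and> i < \<alpha> + \<beta>}
     \<union> {seg n k i (i + 1) | i. \<alpha> + \<beta> + 1 \<le> i \<and> i < mi - \<delta>}
     \<union> {seg n k (\<alpha> + \<beta> - \<eta>) (\<alpha> + \<beta> + 1 + \<eta>)}
     \<union> {seg n k (i - 1 - \<epsilon> i) (i + \<epsilon> i) | i. 1 \<le> i \<and> i \<le> \<alpha>}
     \<union> {seg n k (mi - j - \<xi> j) (mi - j + 1 + \<xi> j) | j. 1 \<le> j \<and> j \<le> \<delta>})"

definition classB_params ::
  "nat \<Rightarrow> int \<Rightarrow> int \<Rightarrow> int \<Rightarrow> int \<Rightarrow> int \<Rightarrow> (int \<Rightarrow> int) \<Rightarrow> (int \<Rightarrow> int) \<Rightarrow> bool" where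
  "classB_params m \<alpha> \<beta> \<gamma> \<delta> \<eta> \<epsilon> \<xi> \<longleftrightarrow>
     0 \<le> \<alpha> \<and> 0 \<le> \<delta> \<and> 2 \<le> \<beta> \<and> 2 \<le> \<gamma> \<and>
     \<alpha> + \<delta> \<le> int m - 5 \<and> \<beta> + \<gamma> = int m - \<alpha> - \<delta> - 1 \<and>
     1 \<le> \<eta> \<and> \<eta> \<le> min (\<beta> - 1) (\<gamma> - 1) \<and>
     (\<forall>i. 1 \<le> i \<and> i \<le> \<alpha> \<longrightarrow> 0 < \<epsilon> i \<and> \<epsilon> i < \<alpha> + \<beta> - 1) \<and>
     (\<forall>i. 1 \<le> i \<and> i < \<alpha> \<longrightarrow> \<epsilon> (i + 1) < \<epsilon> i) \<and>
     (\<forall>j. 1 \<le> j \<and> j \<le> \<delta> \<longrightarrow> 0 < \<xi> j \<and> \<xi> j < \<gamma> + \<delta> - 1) \<and>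
     (\<forall>j. 1 \<le> j \<and> j < \<delta> \<longrightarrow> \<xi> (j + 1) < \<xi> j)"

text \<open>Class B, up to cyclic rotation x \<mapsto> x + k of the labels.\<close>
definition classB :: "nat \<Rightarrow> nat set set \<Rightarrow> bool" where
  "classB m B \<longleftrightarrow> (\<exists>k \<alpha> \<beta> \<gamma> \<delta> \<eta> \<epsilon> \<xi>.
      classB_params m \<alpha> \<beta> \<gamma> \<delta> \<eta> \<epsilon> \<xi> \<and> B = classB_set m k \<alpha> \<beta> \<gamma> \<delta> \<eta> \<epsilon> \<xi>)"

end

theory Submission
  imports Defs
begin

text \<open>
  Lift the labels of the convex (2m-1)-gon to the integers. A simple Hamiltonian path in convex
  position visits at every moment an arc of consecutive vertices, and each new vertex extends this
  arc at one of its two ends; conversely every such arc-growing walk is a simple Hamiltonian path.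

  Lower bound: the zigzag walks s, s+1, s-1, s+2, ... only use chords whose endpoints sum to 2s or
  2s+1. As 2m = 1 mod 2m-1, choosing s = xm shows that the endpoint sums of a blocker hit every
  pair {x, x+1} of consecutive residues, so a blocker has at least m edges. A Class B set has m.

  Blocking: suppose the lift of an SHP avoids a Class B set. No end of the path lies inside the
  arc [\<alpha>, m-\<delta>): its first step would be a boundary edge there, unless it is the edge
  [g, g+1] (g = \<alpha>+\<beta>), after which the walk is forced to zigzag until it uses
  [g-\<eta>, g+1+\<eta>]. Hence the walk sweeps across the arc from its left end (or, after the
  reflection x \<mapsto> m-x, from its right end). The chord by which the walk first reaches a point
  h of the arc starts at the left end lo of the visited arc, and the sum lo + h is nonincreasing
  in h except for one unit jump at g. The \<epsilon>-edges forbid the values 2i-1, 2i of this sum at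
  h = i+\<epsilon>(i), the \<xi>-edges forbid 2-2j, 3-2j at h = m-j-\<xi>(j); this pushes the sum at the
  right end of the arc below 2-2\<delta>, whereas the path has only 2m-1 vertices, which keeps the
  sum at least 2-2\<delta>.
\<close>

section \<open>Lifts and crossing chords\<close>

lemma mod_eq_in_window:
  fixes u u' l n :: int
  assumes "l \<le> u" "u < l + n" "l \<le> u'" "u' < l + n" "u mod n = u' mod n"
  shows "u = u'"
proof -
  have "(u - l) mod n = (u' - l) mod n" using assms(5) by (rule mod_diff_cong) simp
  moreover have "(u - l) mod n = u - l" "(u' - l) mod n = u' - l" using assms by simp_all
  ultimately show ?thesis by simp
qed

lemma mod_small_int:
  fixes x n :: int
  assumes "- n < x" "x < n"
  shows "x mod n = (if x < 0 then x + n else x)"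
proof (cases "x < 0")
  case True
  then have "(x + n) mod n = x + n" using assms by (intro mod_pos_pos_trivial) auto
  then show ?thesis using True by simp
qed (use assms in simp)

lemma vx_int: "0 < n \<Longrightarrow> int (vx n u) = u mod int n"
  unfolding vx_def by simp

lemma vx_less: "0 < n \<Longrightarrow> vx n u < n"
  unfolding vx_def by (simp add: nat_less_iff)

lemma vx_eq_iff: "0 < n \<Longrightarrow> vx n u = vx n u' \<longleftrightarrow> u mod int n = u' mod int n"
  unfolding vx_def by (simp add: eq_nat_nat_iff)

lemma vx_of_nat: "x < n \<Longrightarrow> vx n (int x) = x"
  unfolding vx_def by simp

lemma vx_eq_in_window:
  "\<lbrakk>l \<le> u; u < l + int n; l \<le> u'; u' < l + int n; vx n u = vx n u'\<rbrakk> \<Longrightarrow> u = u'"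
  by (rule mod_eq_in_window) (auto simp: vx_eq_iff)

lemma vx_surj_window:
  assumes "x < n"
  obtains u where "l \<le> u" "u < l + int n" "x = vx n u"
proof
  show "l \<le> l + (int x - l) mod int n" "l + (int x - l) mod int n < l + int n"
    using assms by simp_all
  have "(l + (int x - l) mod int n) mod int n = int x mod int n"
    by (simp add: mod_add_right_eq)
  then show "x = vx n (l + (int x - l) mod int n)"
    using assms vx_of_nat[OF assms] vx_eq_iff[of n] by (metis gr_implies_not0 neq0_conv)
qed

lemma cyc_between_vx:
  assumes "0 < n"
  shows "cyc_between n (vx n a) (vx n c) (vx n b) \<longleftrightarrow>
    0 < (c - a) mod int n \<and> (c - a) mod int n < (b - a) mod int n"
  using assms by (simp add: cyc_between_def vx_int mod_diff_eq)

lemma cyc_between_window: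
  assumes "{a, b, c} \<subseteq> {l..<l + int n}" "distinct [a, b, c]"
  shows "cyc_between n (vx n a) (vx n c) (vx n b) \<longleftrightarrow> (a < b \<longleftrightarrow> c \<in> {min a b<..<max a b})"
proof -
  have "(c - a) mod int n = (if c - a < 0 then c - a + int n else c - a)"
    "(b - a) mod int n = (if b - a < 0 then b - a + int n else b - a)"
    using assms(1) by (simp_all add: mod_small_int)
  then show ?thesis using assms by (cases "a < b") (auto simp: cyc_between_vx)
qed

lemma crosses_window_iff:
  assumes window: "{a, b, c, d} \<subseteq> {l..<l + int n}"
  shows "crosses n {vx n a, vx n b} {vx n c, vx n d} \<longleftrightarrow>
    distinct [a, b, c, d] \<and> (c \<in> {min a b<..<max a b} \<longleftrightarrow> d \<notin> {min a b<..<max a b})"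
proof -
  let ?I = "\<lambda>x y. {min x y<..<max x y}"
  have win: "l \<le> x \<and> x < l + int n" if "x \<in> {a, b, c, d}" for x
    using that window by auto
  have inj: "vx n x = vx n y \<longleftrightarrow> x = y" if "x \<in> {a, b, c, d}" "y \<in> {a, b, c, d}" for x y
    using win[OF that(1)] win[OF that(2)] vx_eq_in_window[of l x n y] by auto
  have cyc: "cyc_between n (vx n x) (vx n w) (vx n y) \<longleftrightarrow> (x < y \<longleftrightarrow> w \<in> ?I x y)"
    if "x \<in> {a, b, c, d}" "y \<in> {a, b, c, d}" "w \<in> {a, b, c, d}" "distinct [x, y, w]" for x y w
    using cyc_between_window[of x y w l n] win[OF that(1)] win[OF that(2)] win[OF that(3)] that(4)
    by simp
  show ?thesis
  proof
    assume "crosses n {vx n a, vx n b} {vx n c, vx n d}"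
    then obtain a' b' c' d' where ab: "{vx n a, vx n b} = {a', b'}" and cd: "{vx n c, vx n d} = {c', d'}"
      and dist: "distinct [a', b', c', d']" and cy: "cyc_between n a' c' b' \<noteq> cyc_between n a' d' b'"
      unfolding crosses_def by blast
    obtain x y where xy: "{x, y} = {a, b}" "a' = vx n x" "b' = vx n y"
      using ab by (auto simp: doubleton_eq_iff)
    obtain u v where uv: "{u, v} = {c, d}" "c' = vx n u" "d' = vx n v"
      using cd by (auto simp: doubleton_eq_iff)
    have mem: "x \<in> {a, b, c, d}" "y \<in> {a, b, c, d}" "u \<in> {a, b, c, d}" "v \<in> {a, b, c, d}"
      using xy(1) uv(1) by blast+
    have "distinct [x, y, u, v]"
      using dist unfolding xy uv by auto
    then have "(u \<in> ?I x y) \<noteq> (v \<in> ?I x y)"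
      using cy cyc[OF mem(1,2,3)] cyc[OF mem(1,2,4)] unfolding xy uv by auto
    moreover have "?I x y = ?I a b"
      using xy(1) by (auto simp: doubleton_eq_iff min.commute max.commute)
    ultimately show "distinct [a, b, c, d] \<and> (c \<in> ?I a b \<longleftrightarrow> d \<notin> ?I a b)"
      using \<open>distinct [x, y, u, v]\<close> xy(1) uv(1) by (auto simp: doubleton_eq_iff)
  next
    assume H: "distinct [a, b, c, d] \<and> (c \<in> ?I a b \<longleftrightarrow> d \<notin> ?I a b)"
    have ab: "a \<in> {a, b, c, d}" "b \<in> {a, b, c, d}" by simp_all
    have "distinct [vx n a, vx n b, vx n c, vx n d]"
      using H by (simp add: inj)
    moreover have "cyc_between n (vx n a) (vx n c) (vx n b) \<noteq> cyc_between n (vx n a) (vx n d) (vx n b)"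
      using H cyc[OF ab, of c] cyc[OF ab, of d] by auto
    ultimately show "crosses n {vx n a, vx n b} {vx n c, vx n d}"
      unfolding crosses_def by blast
  qed
qed

section \<open>Simple Hamiltonian paths are arc-growing walks\<close>

lemma path_edgesI: "Suc i < length p \<Longrightarrow> {p ! i, p ! Suc i} \<in> path_edges p"
  unfolding path_edges_def by blast

lemma path_edges_map_upt: "path_edges (map f [0..<n]) = {{f i, f (Suc i)} | i. Suc i < n}"
  unfolding path_edges_def by (intro Collect_cong ex_cong1) auto

lemma path_edges_rev: "path_edges (rev p) = path_edges p"
proof -
  have *: "path_edges (rev q) \<subseteq> path_edges q" for q :: "nat list"
  proof
    fix e assume "e \<in> path_edges (rev q)"
    then obtain i where i: "e = {rev q ! i, rev q ! Suc i}" "Suc i < length q"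
      unfolding path_edges_def by auto
    then have "e = {q ! (length q - 2 - i), q ! Suc (length q - 2 - i)}"
      by (auto simp: rev_nth Suc_diff_Suc numeral_2_eq_2)
    then show "e \<in> path_edges q" using i(2) path_edgesI[of "length q - 2 - i" q] by simp
  qed
  show ?thesis using *[of p] *[of "rev p"] by simp
qed

lemma SHP_rev: "SHP n p \<Longrightarrow> SHP n (rev p)"
  unfolding SHP_def path_edges_rev by simp

lemma SHP_length: "SHP n p \<Longrightarrow> length p = n"
  unfolding SHP_def by (metis card_atLeastLessThan diff_zero distinct_card)

lemma crosses_irrefl: "\<not> crosses n e e"
  unfolding crosses_def by (auto simp: doubleton_eq_iff)

lemma ex_change_between:
  fixes f :: "nat \<Rightarrow> 'a"
  assumes "f i \<noteq> f k"
  shows "\<exists>j. min i k \<le> j \<and> j < max i k \<and> f j \<noteq> f (Suc j)"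
proof -
  have "\<exists>j. i \<le> j \<and> j < k \<and> f j \<noteq> f (Suc j)" if "i \<le> k" "f i \<noteq> f k" for i k
    using that
  proof (induction k rule: dec_induct)
    case (step k)
    then show ?case by (cases "f k = f i") (auto intro: less_SucI)
  qed simp
  from this[of i k] this[of k i] assms show ?thesis
    by (cases "i \<le> k") (auto simp: min_def max_def)
qed

text \<open>z t lifts the t-th vertex of a path to the integers; the vertices visited up to time t form
  the arc [lo t, hi t].\<close>

locale arc_walk =
  fixes n :: nat and z lo hi :: "nat \<Rightarrow> int"
  assumes start: "lo 0 = z 0" "hi 0 = z 0"
    and extend: "Suc t < n \<Longrightarrow>
      z (Suc t) = lo t - 1 \<and> lo (Suc t) = lo t - 1 \<and> hi (Suc t) = hi t \<or>
      z (Suc t) = hi t + 1 \<and> hi (Suc t) = hi t + 1 \<and> lo (Suc t) = lo t"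
begin

lemma width: "t < n \<Longrightarrow> hi t - lo t = int t"
proof (induction t)
  case (Suc t)
  then show ?case using extend[of t] by auto
qed (use start in simp)

lemma at_end:
  assumes "t < n" shows "z t = lo t \<or> z t = hi t"
proof (cases t)
  case (Suc s)
  then show ?thesis using extend[of s] assms by auto
qed (use start in simp)

lemma mono: "t \<le> t' \<Longrightarrow> t' < n \<Longrightarrow> lo t' \<le> lo t \<and> hi t \<le> hi t'"
proof (induction t' rule: dec_induct)
  case (step s)
  then show ?case using extend[of s] by auto
qed simp

lemma in_arc: "t \<le> t' \<Longrightarrow> t' < n \<Longrightarrow> lo t' \<le> z t \<and> z t \<le> hi t'"
  using at_end[of t] width[of t] mono[of t t'] by auto

lemma new_vertex: "s < t \<Longrightarrow> t < n \<Longrightarrow> z s \<noteq> z t"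
  using in_arc[of s "t - 1"] extend[of "t - 1"] by fastforce

lemma left_step: "0 < t \<Longrightarrow> t < n \<Longrightarrow> z t = lo t \<Longrightarrow> lo t = lo (t - 1) - 1 \<and> hi t = hi (t - 1)"
  using extend[of "t - 1"] width[of t] by auto

end

lemma arc_walk_reflect:
  "arc_walk n z lo hi \<Longrightarrow> arc_walk n (\<lambda>t. c - z t) (\<lambda>t. c - hi t) (\<lambda>t. c - lo t)"
  unfolding arc_walk_def by auto

lemma arc_walk_shift:
  "arc_walk n z lo hi \<Longrightarrow> arc_walk n (\<lambda>t. z t + c) (\<lambda>t. lo t + c) (\<lambda>t. hi t + c)"
  unfolding arc_walk_def by auto

context arc_walk
begin

lemma in_final_window:
  assumes "t < n" shows "z t \<in> {lo (n - 1)..<lo (n - 1) + int n}"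
proof -
  have "t \<le> n - 1" "n - 1 < n" using assms by auto
  then show ?thesis using in_arc[of t "n - 1"] width[of "n - 1"] by auto
qed

lemma edges_nested:
  assumes "s < t" "Suc t < n"
  shows "\<not> crosses n {vx n (z s), vx n (z (Suc s))} {vx n (z t), vx n (z (Suc t))}"
    and "\<not> crosses n {vx n (z t), vx n (z (Suc t))} {vx n (z s), vx n (z (Suc s))}"
proof -
  let ?l = "lo (n - 1)"
  have window: "{z s, z (Suc s), z t, z (Suc t)} \<subseteq> {?l..<?l + int n}"
    and window': "{z t, z (Suc t), z s, z (Suc s)} \<subseteq> {?l..<?l + int n}"
    using in_final_window assms by auto
  have old: "z s \<in> {lo t..hi t}" "z (Suc s) \<in> {lo t..hi t}"
    using in_arc[of s t] in_arc[of "Suc s" t] assms by auto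
  have new: "z t = lo t \<or> z t = hi t" "z (Suc t) = lo t - 1 \<or> z (Suc t) = hi t + 1"
    using at_end[of t] extend[of t] assms by auto
  have "x \<notin> {min (z s) (z (Suc s))<..<max (z s) (z (Suc s))}" if "x = z t \<or> x = z (Suc t)" for x
    using old new that by auto
  then show "\<not> crosses n {vx n (z s), vx n (z (Suc s))} {vx n (z t), vx n (z (Suc t))}"
    by (simp add: crosses_window_iff[OF window])
  have span: "x \<in> {min (z t) (z (Suc t))<..<max (z t) (z (Suc t))} \<longleftrightarrow>
      z t = lo t \<and> z (Suc t) = hi t + 1 \<or> z t = hi t \<and> z (Suc t) = lo t - 1"
    if "x \<in> {lo t..hi t}" "x \<noteq> z t" for x
    using new that by auto
  show "\<not> crosses n {vx n (z t), vx n (z (Suc t))} {vx n (z s), vx n (z (Suc s))}"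
  proof
    assume "crosses n {vx n (z t), vx n (z (Suc t))} {vx n (z s), vx n (z (Suc s))}"
    then show False
      using span[OF old(1)] span[OF old(2)] by (simp add: crosses_window_iff[OF window']) blast
  qed
qed

lemma SHP_walk_path: "SHP n (map (\<lambda>t. vx n (z t)) [0..<n])"
proof -
  let ?p = "map (\<lambda>t. vx n (z t)) [0..<n]"
  have "inj_on (\<lambda>t. vx n (z t)) {0..<n}"
  proof (rule inj_onI)
    fix s t assume st: "s \<in> {0..<n}" "t \<in> {0..<n}" "vx n (z s) = vx n (z t)"
    then have "z s = z t"
      using vx_eq_in_window[of "lo (n - 1)" "z s" n "z t"] in_final_window[of s] in_final_window[of t] by auto
    then show "s = t" using new_vertex[of s t] new_vertex[of t s] st by fastforce
  qed
  then have dist: "distinct ?p" by (simp add: distinct_map)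
  moreover have "set ?p = {0..<n}"
  proof -
    have "set ?p \<subseteq> {0..<n}" using vx_less by auto
    moreover have "card (set ?p) = n" using distinct_card[OF dist] by simp
    ultimately show ?thesis by (simp add: card_subset_eq)
  qed
  moreover have "\<not> crosses n e f" if ef: "e \<in> path_edges ?p" "f \<in> path_edges ?p" for e f
  proof -
    obtain s t where e: "e = {vx n (z s), vx n (z (Suc s))}" "Suc s < n"
      and f: "f = {vx n (z t), vx n (z (Suc t))}" "Suc t < n"
      using ef unfolding path_edges_map_upt by blast
    consider "s < t" | "s = t" | "t < s" by linarith
    then show ?thesis
      by cases (use e f edges_nested[of s t] edges_nested[of t s] crosses_irrefl in auto)
  qed
  ultimately show ?thesis unfolding SHP_def by blast
qed

end

lemma SHP_later_vertices_one_side: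
  assumes shp: "SHP n p" and later: "Suc t < i" "i < n" "Suc t < i'" "i' < n"
  shows "cyc_between n (p ! t) (p ! i) (p ! Suc t) \<longleftrightarrow> cyc_between n (p ! t) (p ! i') (p ! Suc t)"
proof (rule ccontr)
  let ?Q = "\<lambda>i. cyc_between n (p ! t) (p ! i) (p ! Suc t)"
  assume "\<not> (?Q i \<longleftrightarrow> ?Q i')"
  then obtain j where j: "min i i' \<le> j" "j < max i i'" "?Q j \<noteq> ?Q (Suc j)"
    using ex_change_between[of ?Q i i'] by blast
  have len: "length p = n" using SHP_length[OF shp] .
  have idx: "p ! a = p ! b \<longleftrightarrow> a = b" if "a < n" "b < n" for a b
    using shp nth_eq_iff_index_eq[of p a b] that len unfolding SHP_def by simp
  have "Suc t < j" "Suc j < n" using j later by auto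
  then have "crosses n {p ! t, p ! Suc t} {p ! j, p ! Suc j}"
    unfolding crosses_def using j(3) idx
    by (intro exI[of _ "p ! t"] exI[of _ "p ! Suc t"] exI[of _ "p ! j"] exI[of _ "p ! Suc j"]) auto
  moreover have "{p ! t, p ! Suc t} \<in> path_edges p" "{p ! j, p ! Suc j} \<in> path_edges p"
    using \<open>Suc t < j\<close> \<open>Suc j < n\<close> len path_edgesI by auto
  ultimately show False using shp unfolding SHP_def by blast
qed

lemma SHP_nth_less: "SHP n p \<Longrightarrow> i < n \<Longrightarrow> p ! i < n"
  using SHP_length[of n p] unfolding SHP_def by (metis atLeastLessThan_iff nth_mem)

lemma SHP_nth_in_take:
  assumes "SHP n p" "i < n"
  shows "p ! i \<in> set (take (Suc t) p) \<longleftrightarrow> i \<le> t"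
proof -
  have "distinct p" "length p = n" using assms(1) SHP_length unfolding SHP_def by auto
  then show ?thesis
    using assms(2) by (auto simp: in_set_conv_nth nth_eq_iff_index_eq intro!: exI[of _ i])
qed

lemma SHP_visited_after:
  assumes "SHP n p" "x < n" "x \<notin> set (take (Suc t) p)"
  obtains i where "t < i" "i < n" "p ! i = x"
proof -
  have "x \<in> set p" "length p = n" using assms SHP_length unfolding SHP_def by auto
  then obtain i where "i < n" "p ! i = x" by (auto simp: in_set_conv_nth)
  then show thesis using that SHP_nth_in_take[OF assms(1), of i t] assms(3) by (simp add: not_le)
qed

lemma SHP_next_extends_arc:
  assumes shp: "SHP n p" and t: "Suc t < n"
    and arc: "set (take (Suc t) p) = vx n ` {l..h}" and width: "h - l = int t"
  shows "p ! Suc t = vx n (l - 1) \<or> p ! Suc t = vx n (h + 1)"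
proof (rule ccontr)
  assume far: "\<not> ?thesis"
  have len: "length p = n" using SHP_length[OF shp] .
  have visited: "p ! i \<in> vx n ` {l..h} \<longleftrightarrow> i \<le> t" if "i < n" for i
    using SHP_nth_in_take[OF shp that, of t] arc by simp
  define v where "v = p ! t"
  define w where "w = p ! Suc t"
  obtain y where y: "l \<le> y" "y \<le> h" "v = vx n y"
    using visited[of t] t unfolding v_def by auto
  have "w < n" using SHP_nth_less[OF shp t] unfolding w_def .
  then obtain w' where w': "l \<le> w'" "w' < l + int n" "w = vx n w'"
    using vx_surj_window by blast
  have "h < w'"
    using visited[of "Suc t"] t w' unfolding w_def by (metis Suc_n_not_le_n atLeastAtMost_iff image_eqI not_le)
  moreover have "w' \<noteq> h + 1" using far w' unfolding w_def by auto
  moreover have "w' \<noteq> l + int n - 1"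
  proof
    assume "w' = l + int n - 1"
    then have "w = vx n (l - 1 + int n)" using w'(3) by (simp add: diff_add_eq)
    also have "\<dots> = vx n (l - 1)" using t by (simp add: vx_eq_iff)
    finally show False using far unfolding w_def by simp
  qed
  ultimately have w'_range: "h + 1 < w'" "w' < l + int n - 1" using w' by auto
  have unvisited: "vx n x \<notin> set (take (Suc (Suc t)) p)" if "h < x" "x < l + int n" "x \<noteq> w'" for x
  proof -
    have "set (take (Suc (Suc t)) p) = insert w (set (take (Suc t) p))"
      using t len unfolding w_def by (auto simp: take_Suc_conv_app_nth)
    then have "set (take (Suc (Suc t)) p) = insert (vx n w') (vx n ` {l..h})"
      using arc w' by simp
    then show ?thesis using that y vx_eq_in_window[of l x n] w' by fastforce
  qed
  have n: "0 < n" using t by simp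
  have "vx n (h + 1) \<notin> set (take (Suc (Suc t)) p)"
    using w'_range width t by (intro unvisited) auto
  then obtain i1 where i1: "Suc t < i1" "i1 < n" "p ! i1 = vx n (h + 1)"
    using SHP_visited_after[OF shp vx_less[OF n]] by blast
  have "vx n (l + int n - 1) \<notin> set (take (Suc (Suc t)) p)"
    using w'_range width t by (intro unvisited) auto
  then obtain i2 where i2: "Suc t < i2" "i2 < n" "p ! i2 = vx n (l + int n - 1)"
    using SHP_visited_after[OF shp vx_less[OF n]] by blast
  have "cyc_between n v (p ! i1) w"
    using cyc_between_window[of y w' "h + 1" l n] i1 y w' w'_range by auto
  moreover have "\<not> cyc_between n v (p ! i2) w"
    using cyc_between_window[of y w' "l + int n - 1" l n] i2 y w' w'_range by auto
  ultimately show False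
    using SHP_later_vertices_one_side[OF shp i1(1,2) i2(1,2)] unfolding v_def w_def by blast
qed

fun arc_ends :: "nat \<Rightarrow> nat list \<Rightarrow> nat \<Rightarrow> int \<times> int" where
  "arc_ends n p 0 = (int (p ! 0), int (p ! 0))"
| "arc_ends n p (Suc t) = (case arc_ends n p t of (l, h) \<Rightarrow>
      if p ! Suc t = vx n (h + 1) then (l, h + 1) else (l - 1, h))"

lemma SHP_arc_walk:
  assumes shp: "SHP n p"
  obtains z lo hi where "arc_walk n z lo hi" "\<forall>t<n. p ! t = vx n (z t)"
proof -
  define lo where "lo t = fst (arc_ends n p t)" for t
  define hi where "hi t = snd (arc_ends n p t)" for t
  define z where "z t = (case t of 0 \<Rightarrow> int (p ! 0)
      | Suc s \<Rightarrow> if p ! Suc s = vx n (hi s + 1) then hi s + 1 else lo s - 1)" for t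
  have ends_Suc: "lo (Suc t) = (if p ! Suc t = vx n (hi t + 1) then lo t else lo t - 1)"
      "hi (Suc t) = (if p ! Suc t = vx n (hi t + 1) then hi t + 1 else hi t)" for t
    unfolding lo_def hi_def by (simp_all split: prod.split)
  have walk: "arc_walk n z lo hi"
    by unfold_locales (auto simp: lo_def[of 0] hi_def[of 0] z_def ends_Suc)
  have len: "length p = n" using SHP_length[OF shp] .
  have "set (take (Suc t) p) = vx n ` {lo t..hi t} \<and> p ! t = vx n (z t)" if "t < n" for t
    using that
  proof (induction t)
    case 0
    have "p ! 0 < n" using SHP_nth_less[OF shp 0] .
    moreover have "take (Suc 0) p = [p ! 0]" using 0 len by (cases p) auto
    ultimately show ?case by (simp add: lo_def hi_def z_def vx_of_nat)
  next
    case (Suc t)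
    then have arc: "set (take (Suc t) p) = vx n ` {lo t..hi t}" by simp
    have take: "set (take (Suc (Suc t)) p) = insert (p ! Suc t) (set (take (Suc t) p))"
      using Suc.prems len by (auto simp: take_Suc_conv_app_nth)
    have "p ! Suc t = vx n (lo t - 1) \<or> p ! Suc t = vx n (hi t + 1)"
      using SHP_next_extends_arc[OF shp Suc.prems arc] arc_walk.width[OF walk, of t] Suc.prems by simp
    moreover have "{lo t..hi t + 1} = insert (hi t + 1) {lo t..hi t}"
      "{lo t - 1..hi t} = insert (lo t - 1) {lo t..hi t}"
      using arc_walk.width[OF walk, of t] Suc.prems by auto
    ultimately show ?case using arc take by (auto simp: ends_Suc z_def)
  qed
  then show ?thesis using that walk by blast
qed

lemma SHP_lift:
  assumes "SHP n p" "0 < n"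
  obtains z lo hi where "arc_walk n z lo hi" "\<forall>t<n. p ! t = vx n (z t + k)" "c \<le> z 0" "z 0 < c + int n"
proof -
  obtain z lo hi where walk: "arc_walk n z lo hi" and p: "\<forall>t<n. p ! t = vx n (z t)"
    using SHP_arc_walk[OF assms(1)] by blast
  define d where "d = - k - (z 0 - k - c) div int n * int n"
  have "arc_walk n (\<lambda>t. z t + d) (\<lambda>t. lo t + d) (\<lambda>t. hi t + d)"
    using arc_walk_shift[OF walk] .
  moreover have "p ! t = vx n (z t + d + k)" if "t < n" for t
  proof -
    have "z t + d + k = z t + (- ((z 0 - k - c) div int n)) * int n"
      unfolding d_def by simp
    then have "(z t + d + k) mod int n = z t mod int n"
      by (metis mod_mult_self1)
    then show ?thesis using p that assms(2) by (simp add: vx_eq_iff)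
  qed
  moreover have "z 0 + d = c + (z 0 - k - c) mod int n"
    unfolding d_def using div_mult_mod_eq[of "z 0 - k - c" "int n"] by linarith
  then have "c \<le> z 0 + d" "z 0 + d < c + int n" using assms(2) by simp_all
  ultimately show ?thesis using that[of "\<lambda>t. z t + d"] by blast
qed

section \<open>A lower bound for blockers\<close>

definition zigzag :: "int \<Rightarrow> nat \<Rightarrow> int" where
  "zigzag s t = (if even t then s - int (t div 2) else s + int ((t + 1) div 2))"

lemma arc_walk_zigzag: "arc_walk n (zigzag s) (\<lambda>t. s - int (t div 2)) (\<lambda>t. s + int ((t + 1) div 2))"
  by unfold_locales (auto simp: zigzag_def)

lemma zigzag_edge_sum: "zigzag s t + zigzag s (Suc t) \<in> {2 * s, 2 * s + 1}"
  by (cases "even t") (auto simp: zigzag_def elim!: evenE oddE)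

lemma card_hitting_consecutive:
  fixes T :: "int set" and n :: int
  assumes "finite T" "0 < n" and hit: "\<And>x. x mod n \<in> T \<or> (x + 1) mod n \<in> T"
  shows "n \<le> 2 * int (card T)"
proof -
  have "{0..<n} \<subseteq> T \<union> (\<lambda>y. (y - 1) mod n) ` T"
  proof
    fix x assume x: "x \<in> {0..<n}"
    show "x \<in> T \<union> (\<lambda>y. (y - 1) mod n) ` T"
    proof (cases "x \<in> T")
      case False
      then have "(x + 1) mod n \<in> T" using hit[of x] x by simp
      moreover have "((x + 1) mod n - 1) mod n = x" using x by (simp add: mod_diff_left_eq)
      ultimately show ?thesis by (metis UnI2 image_eqI)
    qed simp
  qed
  then have "card {0..<n} \<le> card T + card ((\<lambda>y. (y - 1) mod n) ` T)"
    using assms(1) by (meson card_Un_le card_mono finite_Un finite_imageI le_trans)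
  also have "\<dots> \<le> 2 * card T" using card_image_le[OF assms(1)] by simp
  finally show ?thesis using assms(2) by simp
qed

lemma finite_CK_edges: "finite (CK_edges n)"
proof (rule finite_subset)
  show "CK_edges n \<subseteq> Pow {0..<n}" unfolding CK_edges_def by auto
qed simp

theorem card_ge_if_meets_all_SHP:
  assumes "0 < m" and sub: "B \<subseteq> CK_edges (2 * m - 1)" and meets: "meets_all_SHP (2 * m - 1) B"
  shows "m \<le> card B"
proof -
  define n where "n = 2 * m - 1"
  have n: "0 < n" "int n = 2 * int m - 1" using assms(1) unfolding n_def by auto
  define r where "r e = (\<Sum>x\<in>e. int x) mod int n" for e :: "nat set"
  have finB: "finite B" using finite_subset[OF sub finite_CK_edges] .
  have "x mod int n \<in> r ` B \<or> (x + 1) mod int n \<in> r ` B" for x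
  proof -
    define s where "s = x * int m"
    let ?p = "map (\<lambda>t. vx n (zigzag s t)) [0..<n]"
    have "SHP n ?p" by (rule arc_walk.SHP_walk_path[OF arc_walk_zigzag])
    then obtain e where e: "e \<in> B" "e \<in> path_edges ?p"
      using meets unfolding meets_all_SHP_def n_def by blast
    then obtain t where t: "e = {vx n (zigzag s t), vx n (zigzag s (Suc t))}"
      unfolding path_edges_map_upt by blast
    have "vx n (zigzag s t) \<noteq> vx n (zigzag s (Suc t))"
      using sub e(1) t unfolding n_def CK_edges_def by (auto simp: doubleton_eq_iff)
    then have "r e = (zigzag s t + zigzag s (Suc t)) mod int n"
      unfolding r_def t using n(1) by (simp add: vx_int mod_add_eq)
    moreover have "2 * s = x + x * int n" "2 * s + 1 = x + 1 + x * int n"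
      unfolding s_def n(2) by (simp_all add: algebra_simps)
    ultimately have "r e = x mod int n \<or> r e = (x + 1) mod int n"
      using zigzag_edge_sum[of s t] by (metis insert_iff singletonD mod_mult_self1)
    then show ?thesis using e(1) by (metis image_eqI)
  qed
  then have "int n \<le> 2 * int (card (r ` B))"
    using finB n(1) by (intro card_hitting_consecutive) auto
  also have "\<dots> \<le> 2 * int (card B)" using card_image_le[OF finB] by simp
  finally show ?thesis using n(2) by simp
qed

section \<open>Class B sets meet every simple Hamiltonian path\<close>

definition walk_uses :: "nat \<Rightarrow> (nat \<Rightarrow> int) \<Rightarrow> int \<Rightarrow> int \<Rightarrow> bool" where
  "walk_uses n z u v \<longleftrightarrow>
    (\<exists>t. Suc t < n \<and> {z t mod int n, z (Suc t) mod int n} = {u mod int n, v mod int n})"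

lemma walk_usesI: "Suc t < n \<Longrightarrow> z t = u \<Longrightarrow> z (Suc t) = v \<Longrightarrow> walk_uses n z u v"
  unfolding walk_uses_def by blast

lemma walk_uses_commute: "walk_uses n z u v \<longleftrightarrow> walk_uses n z v u"
  unfolding walk_uses_def by (simp add: insert_commute)

lemma walk_uses_cong:
  "u mod int n = u' mod int n \<Longrightarrow> v mod int n = v' mod int n \<Longrightarrow> walk_uses n z u v \<longleftrightarrow> walk_uses n z u' v'"
  unfolding walk_uses_def by simp

lemma walk_uses_reflect: "walk_uses n (\<lambda>t. c - z t) u v \<longleftrightarrow> walk_uses n z (c - u) (c - v)"
proof -
  have "(c - x) mod int n = y mod int n \<longleftrightarrow> x mod int n = (c - y) mod int n" for x y
  proof -
    have "c - x - y = - (x - (c - y))" by simp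
    then show ?thesis by (metis mod_eq_dvd_iff dvd_minus_iff)
  qed
  then show ?thesis unfolding walk_uses_def doubleton_eq_iff by simp
qed

context arc_walk
begin

lemma zigzag_forced_rightwards:
  assumes z01: "z 0 = g" "z 1 = g + 1" and len: "2 * e + 1 < n"
    and unit: "\<And>x. g - int e - 1 \<le> x \<Longrightarrow> x \<le> g + int e + 1 \<Longrightarrow> x \<noteq> g \<Longrightarrow> \<not> walk_uses n z x (x + 1)"
  shows "walk_uses n z (g - int e) (g + 1 + int e)"
proof -
  have "z (2 * j) = g - int j \<and> z (2 * j + 1) = g + 1 + int j \<and>
      lo (2 * j + 1) = g - int j \<and> hi (2 * j + 1) = g + 1 + int j" if "j \<le> e" for j
    using that
  proof (induction j)
    case 0
    then show ?case using z01 start extend[of 0] len by auto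
  next
    case (Suc j)
    then have IH: "z (2 * j + 1) = g + 1 + int j" "lo (2 * j + 1) = g - int j" "hi (2 * j + 1) = g + 1 + int j"
      by auto
    have t: "Suc (2 * j + 1) < n" "Suc (Suc (2 * j + 1)) < n" using Suc.prems len by auto
    have "\<not> walk_uses n z (g + 1 + int j) (g + 1 + int j + 1)" using unit[of "g + 1 + int j"] Suc.prems by simp
    then have left: "z (2 * j + 2) = g - int j - 1 \<and> lo (2 * j + 2) = g - int j - 1 \<and> hi (2 * j + 2) = g + 1 + int j"
      using extend[OF t(1)] IH walk_usesI[OF t(1), of z] by auto
    have "\<not> walk_uses n z (g - int j - 2) (g - int j - 2 + 1)" using unit[of "g - int j - 2"] Suc.prems by simp
    then have "z (2 * j + 3) = g + 2 + int j \<and> lo (2 * j + 3) = g - int j - 1 \<and> hi (2 * j + 3) = g + 2 + int j"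
      using extend[OF t(2)] left walk_usesI[OF t(2), of z] walk_uses_commute by (auto simp: numeral_eq_Suc)
    then show ?case using left by (simp add: numeral_eq_Suc)
  qed
  then show ?thesis using walk_usesI[of "2 * e" n z] len by simp
qed

lemma zigzag_forced:
  assumes z01: "{z 0, z 1} = {g, g + 1}" and len: "2 * e + 1 < n"
    and unit: "\<And>x. g - int e - 1 \<le> x \<Longrightarrow> x \<le> g + int e + 1 \<Longrightarrow> x \<noteq> g \<Longrightarrow> \<not> walk_uses n z x (x + 1)"
  shows "walk_uses n z (g - int e) (g + 1 + int e)"
proof (cases "z 0 = g")
  case True
  then show ?thesis using zigzag_forced_rightwards[OF _ _ len unit] z01 by (auto simp: doubleton_eq_iff)
next
  case False
  let ?c = "2 * g + 1"
  have z01': "?c - z 0 = g" "?c - z 1 = g + 1" using False z01 by (auto simp: doubleton_eq_iff)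
  have "\<not> walk_uses n (\<lambda>t. ?c - z t) x (x + 1)"
    if "g - int e - 1 \<le> x" "x \<le> g + int e + 1" "x \<noteq> g" for x
    using unit[of "2 * g - x"] that by (simp add: walk_uses_reflect walk_uses_commute algebra_simps)
  then have "walk_uses n (\<lambda>t. ?c - z t) (g - int e) (g + 1 + int e)"
    using arc_walk.zigzag_forced_rightwards[OF arc_walk_reflect[OF arc_walk_axioms] z01' len] by blast
  then show ?thesis by (simp add: walk_uses_reflect walk_uses_commute algebra_simps)
qed

end

text \<open>The edges of \<^const>\<open>classB_set\<close>, written in the coordinates of a lift that absorbs the
  rotation k.\<close>

definition avoids_classB ::
  "nat \<Rightarrow> int \<Rightarrow> int \<Rightarrow> int \<Rightarrow> int \<Rightarrow> (int \<Rightarrow> int) \<Rightarrow> (int \<Rightarrow> int) \<Rightarrow> (nat \<Rightarrow> int) \<Rightarrow> bool" where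
  "avoids_classB m \<alpha> \<beta> \<delta> \<eta> \<epsilon> \<xi> z \<longleftrightarrow> (let n = 2 * m - 1 in
     (\<forall>x. \<alpha> \<le> x \<and> x < int m - \<delta> \<and> x \<noteq> \<alpha> + \<beta> \<longrightarrow> \<not> walk_uses n z x (x + 1)) \<and>
     \<not> walk_uses n z (\<alpha> + \<beta> - \<eta>) (\<alpha> + \<beta> + 1 + \<eta>) \<and>
     (\<forall>i. 1 \<le> i \<and> i \<le> \<alpha> \<longrightarrow> \<not> walk_uses n z (i - 1 - \<epsilon> i) (i + \<epsilon> i)) \<and>
     (\<forall>j. 1 \<le> j \<and> j \<le> \<delta> \<longrightarrow> \<not> walk_uses n z (int m - j - \<xi> j) (int m - j + 1 + \<xi> j)))"

lemma seg_in_path_edges: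
  assumes len: "length p = n" and lift: "\<forall>t<n. p ! t = vx n (z t + k)" and uses: "walk_uses n z x y"
  shows "seg n k x y \<in> path_edges p"
proof -
  obtain t where t: "Suc t < n" "{z t mod int n, z (Suc t) mod int n} = {x mod int n, y mod int n}"
    using uses unfolding walk_uses_def by blast
  have vx_mod: "vx n (w + k) = vx n (w mod int n + k)" for w
    using t by (simp add: vx_eq_iff mod_add_left_eq)
  have "{p ! t, p ! Suc t} = (\<lambda>r. vx n (r + k)) ` {z t mod int n, z (Suc t) mod int n}"
    using lift t(1) by (simp add: vx_mod[of "z t"] vx_mod[of "z (Suc t)"])
  also have "\<dots> = (\<lambda>r. vx n (r + k)) ` {x mod int n, y mod int n}"
    by (simp only: t(2))
  also have "\<dots> = seg n k x y"
    unfolding seg_def by (simp add: vx_mod[of x] vx_mod[of y])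
  finally show ?thesis using path_edgesI[of t p] t len by simp
qed

lemma avoids_classB_if_disjoint:
  assumes disj: "classB_set m k \<alpha> \<beta> \<gamma> \<delta> \<eta> \<epsilon> \<xi> \<inter> path_edges p = {}"
    and len: "length p = 2 * m - 1" and lift: "\<forall>t<2 * m - 1. p ! t = vx (2 * m - 1) (z t + k)"
  shows "avoids_classB m \<alpha> \<beta> \<delta> \<eta> \<epsilon> \<xi> z"
proof -
  let ?B = "classB_set m k \<alpha> \<beta> \<gamma> \<delta> \<eta> \<epsilon> \<xi>"
  have unused: "\<not> walk_uses (2 * m - 1) z x y" if "seg (2 * m - 1) k x y \<in> ?B" for x y
    using seg_in_path_edges[OF len lift] that disj by blast
  show ?thesis
    unfolding avoids_classB_def Let_def
  proof (intro conjI allI impI)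
    fix x assume "\<alpha> \<le> x \<and> x < int m - \<delta> \<and> x \<noteq> \<alpha> + \<beta>"
    then have "seg (2 * m - 1) k x (x + 1) \<in> ?B"
      unfolding classB_set_def Let_def by (cases "x < \<alpha> + \<beta>") auto
    then show "\<not> walk_uses (2 * m - 1) z x (x + 1)" by (rule unused)
  next
    show "\<not> walk_uses (2 * m - 1) z (\<alpha> + \<beta> - \<eta>) (\<alpha> + \<beta> + 1 + \<eta>)"
      by (rule unused) (simp add: classB_set_def Let_def)
  next
    fix i assume "1 \<le> i \<and> i \<le> \<alpha>"
    then show "\<not> walk_uses (2 * m - 1) z (i - 1 - \<epsilon> i) (i + \<epsilon> i)"
      by (intro unused) (auto simp: classB_set_def Let_def)
  next
    fix j assume "1 \<le> j \<and> j \<le> \<delta>"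
    then show "\<not> walk_uses (2 * m - 1) z (int m - j - \<xi> j) (int m - j + 1 + \<xi> j)"
      by (intro unused) (auto simp: classB_set_def Let_def)
  qed
qed

lemma classB_params_mirror: "classB_params m \<alpha> \<beta> \<gamma> \<delta> \<eta> \<epsilon> \<xi> \<Longrightarrow> classB_params m \<delta> \<gamma> \<beta> \<alpha> \<eta> \<xi> \<epsilon>"
  unfolding classB_params_def using min.commute[of "\<beta> - 1" "\<gamma> - 1"] by auto

lemma walk_uses_mirror:
  "walk_uses n (\<lambda>t. int m - int n - z t) u v \<longleftrightarrow> walk_uses n z (int m - u) (int m - v)"
proof -
  have "(int m - int n - x) mod int n = (int m - x) mod int n" for x
  proof -
    have "int m - int n - x = (int m - x) + (- 1) * int n" by simp
    then show ?thesis by (metis mod_mult_self1)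
  qed
  then show ?thesis unfolding walk_uses_reflect by (intro walk_uses_cong)
qed

lemma avoids_classB_mirror:
  assumes "classB_params m \<alpha> \<beta> \<gamma> \<delta> \<eta> \<epsilon> \<xi>" "avoids_classB m \<alpha> \<beta> \<delta> \<eta> \<epsilon> \<xi> z"
  shows "avoids_classB m \<delta> \<gamma> \<alpha> \<eta> \<xi> \<epsilon> (\<lambda>t. int m - int (2 * m - 1) - z t)"
proof -
  let ?n = "2 * m - 1"
  have sum: "\<alpha> + \<beta> + \<gamma> + \<delta> = int m - 1" using assms(1) unfolding classB_params_def by simp
  have unit: "\<And>x. \<alpha> \<le> x \<Longrightarrow> x < int m - \<delta> \<Longrightarrow> x \<noteq> \<alpha> + \<beta> \<Longrightarrow> \<not> walk_uses ?n z x (x + 1)"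
    and eta: "\<not> walk_uses ?n z (\<alpha> + \<beta> - \<eta>) (\<alpha> + \<beta> + 1 + \<eta>)"
    and eps: "\<And>i. 1 \<le> i \<Longrightarrow> i \<le> \<alpha> \<Longrightarrow> \<not> walk_uses ?n z (i - 1 - \<epsilon> i) (i + \<epsilon> i)"
    and xi: "\<And>j. 1 \<le> j \<Longrightarrow> j \<le> \<delta> \<Longrightarrow> \<not> walk_uses ?n z (int m - j - \<xi> j) (int m - j + 1 + \<xi> j)"
    using assms(2) unfolding avoids_classB_def Let_def by blast+
  show ?thesis
    unfolding avoids_classB_def Let_def walk_uses_mirror
  proof (intro conjI allI impI)
    fix x assume "\<delta> \<le> x \<and> x < int m - \<alpha> \<and> x \<noteq> \<delta> + \<gamma>"
    then have "\<not> walk_uses ?n z (int m - x - 1) (int m - x - 1 + 1)" using sum by (intro unit) auto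
    then show "\<not> walk_uses ?n z (int m - x) (int m - (x + 1))" by (simp add: walk_uses_commute diff_diff_eq)
  next
    have e: "int m - (\<delta> + \<gamma> - \<eta>) = \<alpha> + \<beta> + 1 + \<eta>" "int m - (\<delta> + \<gamma> + 1 + \<eta>) = \<alpha> + \<beta> - \<eta>"
      using sum by simp_all
    show "\<not> walk_uses ?n z (int m - (\<delta> + \<gamma> - \<eta>)) (int m - (\<delta> + \<gamma> + 1 + \<eta>))"
      unfolding e using eta walk_uses_commute by blast
  next
    fix i assume "1 \<le> i \<and> i \<le> \<delta>"
    then show "\<not> walk_uses ?n z (int m - (i - 1 - \<xi> i)) (int m - (i + \<xi> i))"
      using xi[of i] by (simp add: walk_uses_commute algebra_simps)
  next
    fix j assume "1 \<le> j \<and> j \<le> \<alpha>"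
    then show "\<not> walk_uses ?n z (int m - (int m - j - \<epsilon> j)) (int m - (int m - j + 1 + \<epsilon> j))"
      using eps[of j] by (simp add: walk_uses_commute algebra_simps)
  qed
qed

context arc_walk
begin

lemma hi_reaches: "t < n \<Longrightarrow> hi 0 \<le> h \<Longrightarrow> h \<le> hi t \<Longrightarrow> \<exists>s\<le>t. hi s = h"
proof (induction t)
  case (Suc t)
  then show ?case
    using extend[of t] by (cases "h \<le> hi t") (auto intro: le_SucI)
qed auto

definition reach :: "int \<Rightarrow> nat" where
  "reach h = (LEAST t. hi t = h)"

lemma reach_le: "hi t = h \<Longrightarrow> reach h \<le> t"
  unfolding reach_def by (rule Least_le)

lemma reach:
  assumes "z 0 < h" "h \<le> hi (n - 1)"
  shows "reach h < n" "0 < reach h" "hi (reach h) = h" "z (reach h) = h"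
    and "hi (reach h - 1) = h - 1" "lo (reach h) = lo (reach h - 1)"
proof -
  have "0 < n" using assms start by (cases n) auto
  then obtain s where s: "s < n" "hi s = h"
    using hi_reaches[of "n - 1" h] assms start by (metis diff_less le_less_trans less_imp_le zero_less_one)
  show hi: "hi (reach h) = h" unfolding reach_def using s(2) by (rule LeastI)
  show "reach h < n" using reach_le[OF s(2)] s(1) by simp
  then have r: "reach h < n" .
  show pos: "0 < reach h" using hi assms start by (cases "reach h") auto
  have "\<not> h \<le> hi (reach h - 1)"
  proof
    assume "h \<le> hi (reach h - 1)"
    moreover have "reach h - 1 < n" using r by simp
    ultimately obtain s' where "s' \<le> reach h - 1" "hi s' = h"
      using hi_reaches[of "reach h - 1" h] assms start by auto
    then show False using reach_le[of s' h] pos by simp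
  qed
  then show "z (reach h) = h" "hi (reach h - 1) = h - 1" "lo (reach h) = lo (reach h - 1)"
    using extend[of "reach h - 1"] r pos hi by auto
qed

lemma reach_mono:
  assumes "z 0 < h" "h < h'" "h' \<le> hi (n - 1)"
  shows "reach h < reach h'"
proof (rule ccontr)
  assume "\<not> reach h < reach h'"
  then have "hi (reach h') \<le> hi (reach h)" using mono[of "reach h'" "reach h"] reach[of h] assms by simp
  then show False using reach[of h] reach[of h'] assms by simp
qed

end

locale classB_walk = arc_walk n z lo hi for n z lo hi +
  fixes m :: nat and \<alpha> \<beta> \<gamma> \<delta> \<eta> :: int and \<epsilon> \<xi> :: "int \<Rightarrow> int"
  assumes n_eq: "n = 2 * m - 1"
    and params: "classB_params m \<alpha> \<beta> \<gamma> \<delta> \<eta> \<epsilon> \<xi>"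
    and avoids: "avoids_classB m \<alpha> \<beta> \<delta> \<eta> \<epsilon> \<xi> z"
begin

lemma n_int: "int n = 2 * int m - 1" and n_ge: "9 \<le> n"
  using params n_eq unfolding classB_params_def by auto

lemma param_bounds:
  "0 \<le> \<alpha>" "0 \<le> \<delta>" "2 \<le> \<beta>" "2 \<le> \<gamma>" "\<alpha> + \<beta> + \<gamma> + \<delta> = int m - 1" "\<alpha> + \<delta> \<le> int m - 5"
  "1 \<le> \<eta>" "\<eta> < \<beta>" "\<eta> < \<gamma>"
  using params unfolding classB_params_def by auto

lemma unit_unused: "\<alpha> \<le> x \<Longrightarrow> x < int m - \<delta> \<Longrightarrow> x \<noteq> \<alpha> + \<beta> \<Longrightarrow> \<not> walk_uses n z x (x + 1)"
  and eta_unused: "\<not> walk_uses n z (\<alpha> + \<beta> - \<eta>) (\<alpha> + \<beta> + 1 + \<eta>)"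
  and eps_unused: "1 \<le> i \<Longrightarrow> i \<le> \<alpha> \<Longrightarrow> \<not> walk_uses n z (i - 1 - \<epsilon> i) (i + \<epsilon> i)"
  and xi_unused: "1 \<le> j \<Longrightarrow> j \<le> \<delta> \<Longrightarrow> \<not> walk_uses n z (int m - j - \<xi> j) (int m - j + 1 + \<xi> j)"
  using avoids n_eq unfolding avoids_classB_def Let_def by blast+

text \<open>Reflecting in m - n (which is m mod n) maps the window [m - \<delta> - n, \<alpha>] of admissible start
  points onto the window [m - \<alpha> - n, \<delta>] of the mirrored parameters.\<close>

lemma mirror:
  "classB_walk n (\<lambda>t. int m - int n - z t) (\<lambda>t. int m - int n - hi t) (\<lambda>t. int m - int n - lo t)
    m \<delta> \<gamma> \<beta> \<alpha> \<eta> \<xi> \<epsilon>"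
  unfolding classB_walk_def classB_walk_axioms_def
  using arc_walk_reflect[OF arc_walk_axioms] n_eq classB_params_mirror[OF params]
    avoids_classB_mirror[OF params avoids] by simp

lemma start_outside: "\<not> (\<alpha> < z 0 \<and> z 0 < int m - \<delta>)"
proof
  assume inside: "\<alpha> < z 0 \<and> z 0 < int m - \<delta>"
  define x where "x = min (z 0) (z 1)"
  have "z 1 = z 0 - 1 \<or> z 1 = z 0 + 1" using extend[of 0] start n_ge by auto
  then have z01: "{z 0, z 1} = {x, x + 1}" unfolding x_def by auto
  have "walk_uses n z (z 0) (z 1)" using walk_usesI[of 0 n z] n_ge by simp
  then have "walk_uses n z x (x + 1)" using z01 walk_uses_commute by (auto simp: doubleton_eq_iff)
  moreover have "\<alpha> \<le> x" "x < int m - \<delta>" using inside z01 by (auto simp: doubleton_eq_iff)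
  ultimately have "x = \<alpha> + \<beta>" using unit_unused by blast
  have e: "int (nat \<eta>) = \<eta>" using param_bounds by simp
  have "walk_uses n z (\<alpha> + \<beta> - int (nat \<eta>)) (\<alpha> + \<beta> + 1 + int (nat \<eta>))"
  proof (rule zigzag_forced)
    show "{z 0, z 1} = {\<alpha> + \<beta>, \<alpha> + \<beta> + 1}" using z01 \<open>x = \<alpha> + \<beta>\<close> by simp
    show "2 * nat \<eta> + 1 < n" using param_bounds n_int e by linarith
    show "\<not> walk_uses n z y (y + 1)"
      if "\<alpha> + \<beta> - int (nat \<eta>) - 1 \<le> y" "y \<le> \<alpha> + \<beta> + int (nat \<eta>) + 1" "y \<noteq> \<alpha> + \<beta>" for y
      using that param_bounds e by (intro unit_unused) auto
  qed
  then show False using eta_unused e by simp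
qed

end

lemma strict_decreasing_gap:
  fixes f :: "int \<Rightarrow> int"
  assumes dec: "\<And>i. 1 \<le> i \<Longrightarrow> i < A \<Longrightarrow> f (i + 1) < f i" and "1 \<le> i" "i \<le> j" "j \<le> A"
  shows "f j + (j - i) \<le> f i"
  using assms(3,4)
proof (induction j rule: int_ge_induct)
  case (step j)
  then show ?case using dec[of j] assms(2) by simp
qed simp

locale classB_sweep = classB_walk +
  assumes start_le: "z 0 \<le> \<alpha>"
    and finish: "int m - \<delta> \<le> hi (n - 1) \<or> hi (n - 1) = int m - \<delta> - 1 \<and> z (n - 1) = lo (n - 1)"
begin

lemma eps_bounds:
  assumes "1 \<le> i" "i \<le> \<alpha>"
  shows "\<alpha> + 1 \<le> i + \<epsilon> i" "i + \<epsilon> i \<le> \<alpha> + \<beta> - 1"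
proof -
  have pos: "\<And>i. 1 \<le> i \<Longrightarrow> i \<le> \<alpha> \<Longrightarrow> 0 < \<epsilon> i \<and> \<epsilon> i < \<alpha> + \<beta> - 1"
    and dec: "\<And>i. 1 \<le> i \<Longrightarrow> i < \<alpha> \<Longrightarrow> \<epsilon> (i + 1) < \<epsilon> i"
    using params unfolding classB_params_def by auto
  show "\<alpha> + 1 \<le> i + \<epsilon> i" using strict_decreasing_gap[where f = \<epsilon> and A = \<alpha> and j = \<alpha>, OF dec assms order_refl] pos[of \<alpha>] assms by simp
  show "i + \<epsilon> i \<le> \<alpha> + \<beta> - 1" using strict_decreasing_gap[where f = \<epsilon> and A = \<alpha> and i = 1, OF dec order_refl assms] pos[of 1] assms by simp
qed

lemma xi_bounds:
  assumes "1 \<le> j" "j \<le> \<delta>"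
  shows "\<alpha> + \<beta> + 2 \<le> int m - j - \<xi> j" "int m - j - \<xi> j \<le> int m - \<delta> - 1"
proof -
  have pos: "\<And>j. 1 \<le> j \<Longrightarrow> j \<le> \<delta> \<Longrightarrow> 0 < \<xi> j \<and> \<xi> j < \<gamma> + \<delta> - 1"
    and dec: "\<And>j. 1 \<le> j \<Longrightarrow> j < \<delta> \<Longrightarrow> \<xi> (j + 1) < \<xi> j"
    using params unfolding classB_params_def by auto
  show "\<alpha> + \<beta> + 2 \<le> int m - j - \<xi> j"
    using strict_decreasing_gap[where f = \<xi> and A = \<delta> and i = 1, OF dec order_refl assms] pos[of 1] assms param_bounds(5) by simp
  show "int m - j - \<xi> j \<le> int m - \<delta> - 1"
    using strict_decreasing_gap[where f = \<xi> and A = \<delta> and j = \<delta>, OF dec assms order_refl] pos[of \<delta>] assms by simp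
qed

lemma eps_decreasing: "1 \<le> i \<Longrightarrow> i < \<alpha> \<Longrightarrow> \<epsilon> (i + 1) < \<epsilon> i"
  and xi_decreasing: "1 \<le> j \<Longrightarrow> j < \<delta> \<Longrightarrow> \<xi> (j + 1) < \<xi> j"
  using params unfolding classB_params_def by auto

abbreviation sweep_end :: int where
  "sweep_end \<equiv> min (int m - \<delta>) (hi (n - 1))"

lemma sweep_end: "int m - \<delta> - 1 \<le> sweep_end" "sweep_end \<le> int m - \<delta>"
  using finish by auto

lemma reach_sweep:
  assumes "\<alpha> + 1 \<le> h" "h \<le> sweep_end"
  shows "reach h < n" "0 < reach h" "hi (reach h) = h" "z (reach h) = h"
    and "hi (reach h - 1) = h - 1" "lo (reach h) = lo (reach h - 1)"
  using reach[of h] assms start_le by auto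

lemma entered_from_left:
  assumes h: "\<alpha> + 1 \<le> h" "h \<le> sweep_end" "h \<noteq> \<alpha> + \<beta> + 1"
  shows "2 \<le> reach h" "z (reach h - 1) = lo (reach h - 1)" "lo (reach h - 1) = lo (reach h - 2) - 1"
    and "walk_uses n z (lo (reach h)) h"
proof -
  let ?r = "reach h"
  note r = reach_sweep[OF h(1,2)]
  have "Suc (?r - 1) < n" "Suc (?r - 1) = ?r" using r by auto
  moreover have "\<not> walk_uses n z (h - 1) (h - 1 + 1)" using h sweep_end by (intro unit_unused) auto
  ultimately have "z (?r - 1) \<noteq> hi (?r - 1)" using walk_usesI[of "?r - 1" n z] r by auto
  then show left: "z (?r - 1) = lo (?r - 1)" using at_end[of "?r - 1"] r by auto
  then show "2 \<le> ?r" using start \<open>z (?r - 1) \<noteq> hi (?r - 1)\<close> r(2) by (cases "?r - 1") auto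
  then have "0 < ?r - 1" "?r - 1 < n" "?r - 1 - 1 = ?r - 2" using r by auto
  then show "lo (?r - 1) = lo (?r - 2) - 1" using left_step[OF _ _ left] by simp
  show "walk_uses n z (lo ?r) h" using walk_usesI[of "?r - 1" n z] left r \<open>Suc (?r - 1) = ?r\<close> by auto
qed

lemma lo_reach_decreasing:
  assumes h: "\<alpha> + 2 \<le> h" "h \<le> sweep_end" "h \<noteq> \<alpha> + \<beta> + 1"
  shows "lo (reach h) < lo (reach (h - 1))"
proof -
  let ?r = "reach h" and ?s = "reach (h - 1)"
  note r = reach_sweep[of h] and s = reach_sweep[of "h - 1"]
  note left = entered_from_left[of h]
  have "?s < ?r" using reach_mono[of "h - 1" h] h start_le by auto
  moreover have "?s \<noteq> ?r - 1"
  proof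
    assume "?s = ?r - 1"
    then have "lo (?r - 1) = hi (?r - 1)" using r s left h by auto
    moreover have "?r - 1 < n" "?r - 1 \<noteq> 0" using r left h by auto
    ultimately show False using width[of "?r - 1"] by auto
  qed
  ultimately have "?s \<le> ?r - 2" by simp
  then have "lo (?r - 2) \<le> lo ?s" using mono[of ?s "?r - 2"] r h by auto
  then show ?thesis using r left h by auto
qed

lemma final_left_steps:
  assumes top: "hi (n - 1) = int m - \<delta> - 1"
  shows "hi (n - 3) = int m - \<delta> - 1" "lo (n - 3) = lo (n - 1) + 2"
proof -
  have t: "0 < n - 2" "n - 1 - 1 = n - 2" "n - 2 - 1 = n - 3" "Suc (n - 2) = n - 1" using n_ge by auto
  have last: "z (n - 1) = lo (n - 1)" using finish top by auto
  then have step1: "lo (n - 1) = lo (n - 2) - 1" "hi (n - 1) = hi (n - 2)"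
    using left_step[of "n - 1"] t n_ge by auto
  have lo_last: "lo (n - 1) = int m - \<delta> - int n" using width[of "n - 1"] top n_ge by simp
  have "z (n - 2) \<noteq> hi (n - 2)"
  proof
    assume "z (n - 2) = hi (n - 2)"
    then have "walk_uses n z (int m - \<delta> - 1) (lo (n - 1))"
      using walk_usesI[of "n - 2" n z] last step1 top t by simp
    moreover have "lo (n - 1) mod int n = (int m - \<delta> - 1 + 1) mod int n" using lo_last by simp
    ultimately have "walk_uses n z (int m - \<delta> - 1) (int m - \<delta> - 1 + 1)"
      using walk_uses_cong[of "int m - \<delta> - 1" n "int m - \<delta> - 1"] by blast
    moreover have "\<not> walk_uses n z (int m - \<delta> - 1) (int m - \<delta> - 1 + 1)"
      using param_bounds by (intro unit_unused) auto
    ultimately show False by blast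
  qed
  then have "z (n - 2) = lo (n - 2)" using at_end[of "n - 2"] n_ge by auto
  then have "lo (n - 2) = lo (n - 3) - 1" "hi (n - 2) = hi (n - 3)"
    using left_step[of "n - 2"] t n_ge by auto
  then show "hi (n - 3) = int m - \<delta> - 1" "lo (n - 3) = lo (n - 1) + 2" using step1 top by auto
qed

lemma leaves_to_left:
  assumes h: "\<alpha> + 1 \<le> h" "h \<le> int m - \<delta> - 1" "h \<noteq> \<alpha> + \<beta>"
  shows "walk_uses n z h (lo (reach h) - 1)"
proof -
  let ?r = "reach h"
  have r: "?r < n" "0 < ?r" "hi ?r = h" "z ?r = h" using reach_sweep[of h] h sweep_end by auto
  have "\<exists>t. ?r < t \<and> t < n \<and> hi t = h"
  proof (cases "h + 1 \<le> sweep_end")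
    case True
    let ?t = "reach (h + 1) - 1"
    have "?r < reach (h + 1)" using reach_mono[of h "h + 1"] h True start_le by simp
    moreover have "z ?t = lo ?t" "hi ?t = h" "reach (h + 1) < n"
      using entered_from_left[of "h + 1"] reach_sweep[of "h + 1"] h True by auto
    moreover have "lo ?r \<noteq> hi ?r" using width[of ?r] r by auto
    ultimately have "?r \<noteq> ?t" using r by auto
    then show ?thesis using \<open>?r < reach (h + 1)\<close> \<open>hi ?t = h\<close> \<open>reach (h + 1) < n\<close>
      by (intro exI[of _ ?t]) auto
  next
    case False
    then have top: "hi (n - 1) = h" "h = int m - \<delta> - 1" using h sweep_end by auto
    then have "hi (n - 3) = h" using final_left_steps by simp
    moreover have "hi (n - 3) \<le> hi (n - 2)" "hi (n - 2) \<le> hi (n - 1)"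
      using mono[of "n - 3" "n - 2"] mono[of "n - 2" "n - 1"] n_ge by auto
    ultimately have "hi (n - 2) = h" using top by simp
    have "?r \<le> n - 3" using reach_le \<open>hi (n - 3) = h\<close> .
    then show ?thesis using \<open>hi (n - 2) = h\<close> n_ge by (intro exI[of _ "n - 2"]) auto
  qed
  then obtain t where t: "?r < t" "t < n" "hi t = h" by blast
  then have "hi (Suc ?r) = h" using mono[of ?r "Suc ?r"] mono[of "Suc ?r" t] r by fastforce
  then have "z (Suc ?r) = lo ?r - 1" using extend[of ?r] t r by auto
  then show ?thesis using walk_usesI[of ?r n z] t r by auto
qed

end

context classB_sweep
begin

text \<open>lo (reach h) and h are the endpoints of the chord along which the walk first reaches h.\<close>

definition entry_sum :: "int \<Rightarrow> int" where
  "entry_sum h = lo (reach h) + h"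

lemma entry_sum_antimono:
  assumes "\<alpha> + 1 \<le> h" "h \<le> h'" "h' \<le> sweep_end" "h' \<le> \<alpha> + \<beta> \<or> \<alpha> + \<beta> + 1 \<le> h"
  shows "entry_sum h' \<le> entry_sum h"
  using assms(2-4)
proof (induction h' rule: int_ge_induct)
  case (step i)
  then have "lo (reach (i + 1)) < lo (reach i)"
    using lo_reach_decreasing[of "i + 1"] assms(1) by auto
  then show ?case using step unfolding entry_sum_def by auto
qed simp

lemma entry_sum_jump: "entry_sum (\<alpha> + \<beta> + 1) \<le> entry_sum (\<alpha> + \<beta>) + 1"
proof -
  have "reach (\<alpha> + \<beta>) < reach (\<alpha> + \<beta> + 1)" "reach (\<alpha> + \<beta> + 1) < n"
    using reach_mono[of "\<alpha> + \<beta>" "\<alpha> + \<beta> + 1"] reach_sweep[of "\<alpha> + \<beta> + 1"] start_le param_bounds sweep_end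
    by auto
  then show ?thesis using mono[of "reach (\<alpha> + \<beta>)" "reach (\<alpha> + \<beta> + 1)"] unfolding entry_sum_def by auto
qed

lemma entry_sum_first: "entry_sum (\<alpha> + 1) \<le> 2 * \<alpha>"
proof -
  let ?r = "reach (\<alpha> + 1)"
  have r: "2 \<le> ?r" "?r < n" "hi (?r - 1) = \<alpha>" "lo ?r = lo (?r - 1)"
    using entered_from_left[of "\<alpha> + 1"] reach_sweep[of "\<alpha> + 1"] param_bounds sweep_end by auto
  moreover have "?r - 1 < n" using r by simp
  ultimately show ?thesis using width[of "?r - 1"] unfolding entry_sum_def by auto
qed

lemma walk_uses_if_entry_sum:
  assumes h: "\<alpha> + 1 \<le> h" "h \<le> int m - \<delta> - 1" "h \<noteq> \<alpha> + \<beta>" "h \<noteq> \<alpha> + \<beta> + 1"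
    and sum: "entry_sum h mod int n = (x + h) mod int n \<or> (entry_sum h - 1) mod int n = (x + h) mod int n"
  shows "walk_uses n z x h"
proof -
  have cancel: "(a + h) mod int n = (b + h) mod int n \<Longrightarrow> a mod int n = b mod int n" for a b
    by (simp add: mod_eq_dvd_iff)
  from sum show ?thesis
  proof
    assume "entry_sum h mod int n = (x + h) mod int n"
    then have "lo (reach h) mod int n = x mod int n" unfolding entry_sum_def by (rule cancel)
    moreover have "walk_uses n z (lo (reach h)) h" using entered_from_left(4)[of h] h sweep_end by auto
    ultimately show ?thesis using walk_uses_cong[of "lo (reach h)" n x h h] by simp
  next
    assume "(entry_sum h - 1) mod int n = (x + h) mod int n"
    then have "(lo (reach h) - 1 + h) mod int n = (x + h) mod int n"
      unfolding entry_sum_def by (simp add: diff_add_eq)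
    then have "(lo (reach h) - 1) mod int n = x mod int n" by (rule cancel)
    then have "walk_uses n z h x"
      using leaves_to_left[OF h(1-3)] walk_uses_cong[of h n h "lo (reach h) - 1" x] by simp
    then show ?thesis using walk_uses_commute by blast
  qed
qed

lemma eps_obstacle:
  assumes i: "1 \<le> i" "i \<le> \<alpha>"
  shows "entry_sum (i + \<epsilon> i) \<noteq> 2 * i - 1 \<and> entry_sum (i + \<epsilon> i) \<noteq> 2 * i"
proof (intro conjI notI)
  have h: "\<alpha> + 1 \<le> i + \<epsilon> i" "i + \<epsilon> i \<le> int m - \<delta> - 1" "i + \<epsilon> i \<noteq> \<alpha> + \<beta>" "i + \<epsilon> i \<noteq> \<alpha> + \<beta> + 1"
    using eps_bounds[OF i] param_bounds by auto
  have sum: "i - 1 - \<epsilon> i + (i + \<epsilon> i) = 2 * i - 1" by simp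
  show False if "entry_sum (i + \<epsilon> i) = 2 * i - 1"
    using walk_uses_if_entry_sum[OF h, of "i - 1 - \<epsilon> i"] that sum eps_unused[OF i] by simp
  show False if "entry_sum (i + \<epsilon> i) = 2 * i"
    using walk_uses_if_entry_sum[OF h, of "i - 1 - \<epsilon> i"] that sum eps_unused[OF i] by simp
qed

lemma xi_obstacle:
  assumes j: "1 \<le> j" "j \<le> \<delta>"
  shows "entry_sum (int m - j - \<xi> j) \<noteq> 2 - 2 * j \<and> entry_sum (int m - j - \<xi> j) \<noteq> 3 - 2 * j"
proof (intro conjI notI)
  let ?h = "int m - j - \<xi> j" and ?x = "int m - j + 1 + \<xi> j"
  have h: "\<alpha> + 1 \<le> ?h" "?h \<le> int m - \<delta> - 1" "?h \<noteq> \<alpha> + \<beta>" "?h \<noteq> \<alpha> + \<beta> + 1"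
    using xi_bounds[OF j] param_bounds by auto
  have sum: "(?x + ?h) mod int n = (2 - 2 * j) mod int n"
  proof -
    have "?x + ?h = (2 - 2 * j) + 1 * int n" using n_int by simp
    then show ?thesis by (metis mod_mult_self1)
  qed
  have unused: "\<not> walk_uses n z ?x ?h" using xi_unused[OF j] walk_uses_commute by blast
  show False if "entry_sum ?h = 2 - 2 * j"
    using walk_uses_if_entry_sum[OF h, of ?x] that sum unused by simp
  show False if "entry_sum ?h = 3 - 2 * j"
    using walk_uses_if_entry_sum[OF h, of ?x] that sum unused by simp
qed

lemma eps_chain:
  assumes "1 \<le> i" "i \<le> \<alpha>"
  shows "entry_sum (i + \<epsilon> i) \<le> 2 * i - 2"
  using assms(2,1)
proof (induction i rule: int_le_induct)
  case base
  have "entry_sum (\<alpha> + \<epsilon> \<alpha>) \<le> entry_sum (\<alpha> + 1)"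
    using eps_bounds[of \<alpha>] base param_bounds sweep_end by (intro entry_sum_antimono) auto
  then show ?case using entry_sum_first eps_obstacle[of \<alpha>] base by auto
next
  case (step i)
  have "i + \<epsilon> i \<le> i - 1 + \<epsilon> (i - 1)" using eps_decreasing[of "i - 1"] step by simp
  then have "entry_sum (i - 1 + \<epsilon> (i - 1)) \<le> entry_sum (i + \<epsilon> i)"
    using eps_bounds[of i] eps_bounds[of "i - 1"] step param_bounds sweep_end by (intro entry_sum_antimono) auto
  then show ?case using step eps_obstacle[of "i - 1"] by auto
qed

lemma entry_sum_beta: "entry_sum (\<alpha> + \<beta>) \<le> 0"
proof (cases "\<alpha> = 0")
  case True
  have "entry_sum (\<alpha> + \<beta>) \<le> entry_sum (\<alpha> + 1)"
    using param_bounds sweep_end by (intro entry_sum_antimono) auto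
  then show ?thesis using entry_sum_first True by simp
next
  case False
  have "entry_sum (\<alpha> + \<beta>) \<le> entry_sum (1 + \<epsilon> 1)"
    using eps_bounds[of 1] False param_bounds sweep_end by (intro entry_sum_antimono) auto
  then show ?thesis using eps_chain[of 1] False param_bounds by simp
qed

lemma xi_chain:
  assumes "1 \<le> j" "j \<le> \<delta>"
  shows "entry_sum (int m - j - \<xi> j) \<le> 1 - 2 * j"
  using assms
proof (induction j rule: int_ge_induct)
  case base
  have "entry_sum (int m - 1 - \<xi> 1) \<le> entry_sum (\<alpha> + \<beta> + 1)"
    using xi_bounds[of 1] base param_bounds sweep_end by (intro entry_sum_antimono) auto
  then show ?case using entry_sum_jump entry_sum_beta xi_obstacle[of 1] base by auto
next
  case (step j)
  have "int m - j - \<xi> j \<le> int m - (j + 1) - \<xi> (j + 1)" using xi_decreasing[of j] step by simp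
  then have "entry_sum (int m - (j + 1) - \<xi> (j + 1)) \<le> entry_sum (int m - j - \<xi> j)"
    using xi_bounds[of j] xi_bounds[of "j + 1"] step param_bounds sweep_end by (intro entry_sum_antimono) auto
  then show ?case using step xi_obstacle[of "j + 1"] by auto
qed

lemma entry_sum_end_upper: "entry_sum sweep_end \<le> 1 - 2 * \<delta>"
proof (cases "\<delta> = 0")
  case True
  have "entry_sum sweep_end \<le> entry_sum (\<alpha> + \<beta> + 1)"
    using param_bounds sweep_end by (intro entry_sum_antimono) auto
  then show ?thesis using entry_sum_jump entry_sum_beta True by simp
next
  case False
  have "entry_sum sweep_end \<le> entry_sum (int m - \<delta> - \<xi> \<delta>)"
    using xi_bounds[of \<delta>] False param_bounds sweep_end by (intro entry_sum_antimono) auto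
  then show ?thesis using xi_chain[of \<delta>] False param_bounds by simp
qed

lemma entry_sum_end_lower: "2 - 2 * \<delta> \<le> entry_sum sweep_end"
proof (cases "int m - \<delta> \<le> hi (n - 1)")
  case True
  then have "reach (int m - \<delta>) < n" "hi (reach (int m - \<delta>)) = int m - \<delta>"
    using reach_sweep[of "int m - \<delta>"] param_bounds by auto
  then show ?thesis using True width[of "reach (int m - \<delta>)"] n_int unfolding entry_sum_def by auto
next
  case False
  then have top: "hi (n - 1) = int m - \<delta> - 1" using finish by auto
  then have "reach (int m - \<delta> - 1) \<le> n - 3" using final_left_steps(1) by (intro reach_le)
  then have "lo (n - 3) \<le> lo (reach (int m - \<delta> - 1))" using mono n_ge by simp
  then show ?thesis
    using top final_left_steps(2)[OF top] width[of "n - 1"] n_ge n_int unfolding entry_sum_def by auto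
qed

theorem sweep_impossible: False
  using entry_sum_end_upper entry_sum_end_lower by simp

end

context classB_walk
begin

lemma no_sweep:
  assumes "z 0 \<le> \<alpha>" "int m - \<delta> \<le> hi (n - 1) \<or> hi (n - 1) = int m - \<delta> - 1 \<and> z (n - 1) = lo (n - 1)"
  shows False
proof -
  interpret classB_sweep n z lo hi m \<alpha> \<beta> \<gamma> \<delta> \<eta> \<epsilon> \<xi>
    using assms by unfold_locales
  show False by (rule sweep_impossible)
qed

lemma no_mirrored_sweep:
  assumes "int m - \<delta> - int n \<le> z 0"
    and "lo (n - 1) \<le> \<alpha> - int n \<or> lo (n - 1) = \<alpha> - int n + 1 \<and> z (n - 1) = hi (n - 1)"
  shows False
  using classB_walk.no_sweep[OF mirror] assms by auto

text \<open>w is the lift, in the window of start points, of the last vertex of the path.\<close>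

lemma ends_outside:
  assumes z0: "int m - \<delta> - int n \<le> z 0" "z 0 \<le> \<alpha>"
    and w: "int m - \<delta> - int n \<le> w" "w \<le> \<alpha>" "z (n - 1) mod int n = w mod int n"
  shows False
proof -
  have wide: "hi (n - 1) - lo (n - 1) = int n - 1" using width[of "n - 1"] n_ge by simp
  have inner: "lo (n - 1) \<le> z 0" "z 0 \<le> hi (n - 1)" using in_arc[of 0 "n - 1"] n_ge by auto
  have bounds: "\<alpha> + 5 \<le> int m - \<delta>" using param_bounds by simp
  consider "z (n - 1) = hi (n - 1)" | "z (n - 1) = lo (n - 1)" using at_end[of "n - 1"] n_ge by auto
  then show False
  proof cases
    case 1
    show False
    proof (cases "int m - \<delta> \<le> hi (n - 1)")
      case False
      then have "hi (n - 1) = w"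
        using mod_eq_in_window[of "int m - \<delta> - int n" "hi (n - 1)" "int n" w] 1 z0 w inner bounds by auto
      then have "lo (n - 1) \<le> \<alpha> - int n + 1" using w wide by linarith
      then show False using no_mirrored_sweep[OF z0(1)] 1 by (cases "lo (n - 1) = \<alpha> - int n + 1") auto
    qed (use no_sweep z0 in blast)
  next
    case 2
    show False
    proof (cases "lo (n - 1) \<le> \<alpha> - int n")
      case False
      then have "lo (n - 1) = w"
        using mod_eq_in_window[of "\<alpha> - int n + 1" "lo (n - 1)" "int n" w] 2 z0 w inner bounds by auto
      then have "int m - \<delta> - 1 \<le> hi (n - 1)" using w wide by linarith
      then show False using no_sweep[OF z0(2)] 2 by (cases "hi (n - 1) = int m - \<delta> - 1") auto
    qed (use no_mirrored_sweep z0 in blast)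
  qed
qed

end

lemma classB_lift:
  assumes params: "classB_params m \<alpha> \<beta> \<gamma> \<delta> \<eta> \<epsilon> \<xi>" and shp: "SHP (2 * m - 1) p"
    and disj: "classB_set m k \<alpha> \<beta> \<gamma> \<delta> \<eta> \<epsilon> \<xi> \<inter> path_edges p = {}"
  obtains z lo hi where "classB_walk (2 * m - 1) z lo hi m \<alpha> \<beta> \<gamma> \<delta> \<eta> \<epsilon> \<xi>"
    "\<forall>t<2 * m - 1. p ! t = vx (2 * m - 1) (z t + k)" "int m - \<delta> - int (2 * m - 1) \<le> z 0" "z 0 \<le> \<alpha>"
proof -
  let ?n = "2 * m - 1"
  have "0 < ?n" using params unfolding classB_params_def by linarith
  then obtain z lo hi where walk: "arc_walk ?n z lo hi" and lift: "\<forall>t<?n. p ! t = vx ?n (z t + k)"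
    and z0: "int m - \<delta> - int ?n \<le> z 0" "z 0 < int m - \<delta> - int ?n + int ?n"
    using SHP_lift[OF shp, of k "int m - \<delta> - int ?n"] by blast
  have cw: "classB_walk ?n z lo hi m \<alpha> \<beta> \<gamma> \<delta> \<eta> \<epsilon> \<xi>"
    using walk params avoids_classB_if_disjoint[OF disj SHP_length[OF shp] lift]
    by (simp add: classB_walk_def classB_walk_axioms_def)
  then have "z 0 \<le> \<alpha>" using classB_walk.start_outside z0 by fastforce
  then show thesis using that cw lift z0 by blast
qed

theorem classB_meets_SHP:
  assumes params: "classB_params m \<alpha> \<beta> \<gamma> \<delta> \<eta> \<epsilon> \<xi>" and shp: "SHP (2 * m - 1) p"
  shows "classB_set m k \<alpha> \<beta> \<gamma> \<delta> \<eta> \<epsilon> \<xi> \<inter> path_edges p \<noteq> {}"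
proof
  let ?n = "2 * m - 1"
  assume disj: "classB_set m k \<alpha> \<beta> \<gamma> \<delta> \<eta> \<epsilon> \<xi> \<inter> path_edges p = {}"
  obtain z lo hi where walk: "classB_walk ?n z lo hi m \<alpha> \<beta> \<gamma> \<delta> \<eta> \<epsilon> \<xi>"
    and lift: "\<forall>t<?n. p ! t = vx ?n (z t + k)" and z0: "int m - \<delta> - int ?n \<le> z 0" "z 0 \<le> \<alpha>"
    using classB_lift[OF params shp disj] by blast
  obtain z' lo' hi' where lift': "\<forall>t<?n. rev p ! t = vx ?n (z' t + k)"
    and z0': "int m - \<delta> - int ?n \<le> z' 0" "z' 0 \<le> \<alpha>"
    using classB_lift[OF params SHP_rev[OF shp]] disj path_edges_rev by metis
  have n: "9 \<le> ?n" using classB_walk.n_ge[OF walk] .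
  have "rev p ! 0 = p ! (?n - 1)" using SHP_length[OF shp] n by (simp add: rev_nth)
  then have "(z (?n - 1) + k) mod int ?n = (z' 0 + k) mod int ?n"
    using lift lift' n by (simp add: vx_eq_iff)
  then have "z (?n - 1) mod int ?n = z' 0 mod int ?n" by (simp add: mod_eq_dvd_iff)
  then show False using classB_walk.ends_outside[OF walk z0 z0'] by blast
qed

lemma seg_in_CK_edges:
  assumes "0 < y - x" "y - x < int n"
  shows "seg n k x y \<in> CK_edges n"
proof -
  have "vx n (x + k) \<noteq> vx n (y + k)"
    using vx_eq_in_window[of "x + k" "x + k" n "y + k"] assms by auto
  then show ?thesis using vx_less[of n] assms unfolding seg_def CK_edges_def by auto
qed

lemma classB_set_subset_CK_edges:
  assumes params: "classB_params m \<alpha> \<beta> \<gamma> \<delta> \<eta> \<epsilon> \<xi>"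
  shows "classB_set m k \<alpha> \<beta> \<gamma> \<delta> \<eta> \<epsilon> \<xi> \<subseteq> CK_edges (2 * m - 1)"
proof
  let ?n = "2 * m - 1"
  have n: "int ?n = 2 * int m - 1" "\<alpha> + \<beta> + \<gamma> + \<delta> = int m - 1" "0 \<le> \<alpha>" "0 \<le> \<delta>" "2 \<le> \<beta>" "2 \<le> \<gamma>"
    "1 \<le> \<eta>" "\<eta> \<le> \<beta> - 1"
    and eps_bd: "\<And>i. 1 \<le> i \<Longrightarrow> i \<le> \<alpha> \<Longrightarrow> 0 < \<epsilon> i \<and> \<epsilon> i < \<alpha> + \<beta> - 1"
    and xi_bd: "\<And>j. 1 \<le> j \<Longrightarrow> j \<le> \<delta> \<Longrightarrow> 0 < \<xi> j \<and> \<xi> j < \<gamma> + \<delta> - 1"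
    using params unfolding classB_params_def by auto
  fix e assume "e \<in> classB_set m k \<alpha> \<beta> \<gamma> \<delta> \<eta> \<epsilon> \<xi>"
  then consider (unit) i where "e = seg ?n k i (i + 1)"
    | (eta) "e = seg ?n k (\<alpha> + \<beta> - \<eta>) (\<alpha> + \<beta> + 1 + \<eta>)"
    | (eps) i where "e = seg ?n k (i - 1 - \<epsilon> i) (i + \<epsilon> i)" "1 \<le> i" "i \<le> \<alpha>"
    | (xi) j where "e = seg ?n k (int m - j - \<xi> j) (int m - j + 1 + \<xi> j)" "1 \<le> j" "j \<le> \<delta>"
    unfolding classB_set_def Let_def by blast
  then show "e \<in> CK_edges ?n"
  proof cases
    case unit
    then show ?thesis using n by (simp add: seg_in_CK_edges)
  next
    case eta
    then show ?thesis using n by (simp add: seg_in_CK_edges)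
  next
    case (eps i)
    then show ?thesis using n eps_bd[of i] by (simp add: seg_in_CK_edges)
  next
    case (xi j)
    then show ?thesis using n xi_bd[of j] by (simp add: seg_in_CK_edges)
  qed
qed

lemma card_classB_set_le:
  assumes params: "classB_params m \<alpha> \<beta> \<gamma> \<delta> \<eta> \<epsilon> \<xi>"
  shows "card (classB_set m k \<alpha> \<beta> \<gamma> \<delta> \<eta> \<epsilon> \<xi>) \<le> m"
proof -
  let ?n = "2 * m - 1"
  have card_le: "card {f i | i. a \<le> i \<and> i < b} \<le> nat (b - a)" for f :: "int \<Rightarrow> nat set" and a b
  proof -
    have "{f i | i. a \<le> i \<and> i < b} = f ` {a..<b}" by auto
    then show ?thesis using card_image_le[of "{a..<b}" f] by simp
  qed
  have "card {seg ?n k i (i + 1) | i. \<alpha> \<le> i \<and> i < \<alpha> + \<beta>} \<le> nat \<beta>"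
    using card_le[of _ \<alpha> "\<alpha> + \<beta>"] by simp
  moreover have "card {seg ?n k i (i + 1) | i. \<alpha> + \<beta> + 1 \<le> i \<and> i < int m - \<delta>} \<le> nat \<gamma>"
  proof -
    have "int m - \<delta> - (\<alpha> + \<beta> + 1) = \<gamma>" using params unfolding classB_params_def by simp
    then show ?thesis using card_le[of _ "\<alpha> + \<beta> + 1" "int m - \<delta>"] by simp
  qed
  moreover have "card {seg ?n k (i - 1 - \<epsilon> i) (i + \<epsilon> i) | i. 1 \<le> i \<and> i \<le> \<alpha>} \<le> nat \<alpha>"
    using card_le[of "\<lambda>i. seg ?n k (i - 1 - \<epsilon> i) (i + \<epsilon> i)" 1 "\<alpha> + 1"] by (simp add: zle_add1_eq_le)
  moreover have "card {seg ?n k (int m - j - \<xi> j) (int m - j + 1 + \<xi> j) | j. 1 \<le> j \<and> j \<le> \<delta>} \<le> nat \<delta>"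
    using card_le[of "\<lambda>j. seg ?n k (int m - j - \<xi> j) (int m - j + 1 + \<xi> j)" 1 "\<delta> + 1"]
    by (simp add: zle_add1_eq_le)
  ultimately have "card (classB_set m k \<alpha> \<beta> \<gamma> \<delta> \<eta> \<epsilon> \<xi>) \<le> nat \<beta> + nat \<gamma> + 1 + nat \<alpha> + nat \<delta>"
    unfolding classB_set_def Let_def
    by (intro card_Un_le[THEN le_trans] add_mono) (simp_all add: card_insert_le)
  also have "\<dots> = m" using params unfolding classB_params_def by auto
  finally show ?thesis .
qed

theorem theorem2:
  fixes m :: nat and B :: "nat set set"
  assumes "m \<ge> 2" and "classB m B"
  shows "SHP_blocker (2 * m - 1) B"
proof -
  obtain k \<alpha> \<beta> \<gamma> \<delta> \<eta> \<epsilon> \<xi> where params: "classB_params m \<alpha> \<beta> \<gamma> \<delta> \<eta> \<epsilon> \<xi>"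
    and B: "B = classB_set m k \<alpha> \<beta> \<gamma> \<delta> \<eta> \<epsilon> \<xi>"
    using assms(2) unfolding classB_def by blast
  have "B \<subseteq> CK_edges (2 * m - 1)" using classB_set_subset_CK_edges[OF params] B by simp
  moreover have "meets_all_SHP (2 * m - 1) B"
    unfolding meets_all_SHP_def B using classB_meets_SHP[OF params] by blast
  moreover have "card B \<le> card B'"
    if "B' \<subseteq> CK_edges (2 * m - 1) \<and> meets_all_SHP (2 * m - 1) B'" for B'
  proof -
    have "card B \<le> m" using card_classB_set_le[OF params] B by simp
    also have "m \<le> card B'" using card_ge_if_meets_all_SHP[of m B'] that assms(1) by simp
    finally show ?thesis .
  qed
  ultimately show ?thesis unfolding SHP_blocker_def by blast
qed

end
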